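(* Let $D=(\mathcal V,\mathcal A)$, $F$, $B$ and $T=(V,A,L)$ with root $r$ be as in the context, let $\mathcal S=F^{-1}(1)\cup B^{-1}(\mathbb N^+)$, and let $Q(X,z)$ be the polynomial defined there. Then $Q(X,z)$ contains, in its sum-product expansion (with nonzero coefficient), a monomial of the form $z^{|\mathcal S|}\,b(X)$, where $b(X)$ is a multilinear monomial in exactly $\eta$ distinct variables from $X=\{x_w: w\in\mathcal V\}$, if and only if $T$ has an $\mathcal S$-embedding into $D$.
   Context: $D=(\mathcal V,\mathcal A)$ is a digraph with $F:\mathcal V\to\{0,1\}$, $B:\mathcal V\to\mathbb N$; $T=(V,A)$ is a directed tree (orientation of a tree) of order $\eta$ with $L:V\to\mathbb N$, rooted at a vertex $r$; for $u\ne r$, $p(u)$ is its parent. For $u\in V$ let $N^{in}(u)=\{v: (v,u)\in A,\ v\neq p(u)\}$ and $N^{out}(u)=\{v:(u,v)\in A,\ v\ne p(u)\}$ (so $N^{in}(u)\cup N^{out}(u)$ is the set of children of $u$). Let $\mathcal S=F^{-1}(1)\cup B^{-1}(\mathbb N^+)$. Variables: $x_w$ for $w\in\mathcal V$, and $z$. For $u\in V,w\in\mathcal V$ set $\zeta(u,w)=z$ if $w\in\mathcal S$ and $L(u)\le B(w)$; $\zeta(u,w)=1$ if $w\notin\mathcal S$ and $L(u)\le B(w)$; $\zeta(u,w)=0$ if $L(u)>B(w)$. Define $Q_{u,w}(X)$ bottom-up: if $u$ has no children, $Q_{u,w}=\zeta(u,w)x_w$; otherwise $Q_{u,w}=\zeta(u,w)\,x_w\cdot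 Q^+_{u,w}\cdot Q^-_{u,w}$, where $Q^+_{u,w}=\prod_{v\in N^{in}(u)}\sum_{(w',w)\in\mathcal A}Q_{v,w'}$ and $Q^-_{u,w}=\prod_{v\in N^{out}(u)}\sum_{(w,w')\in\mathcal A}Q_{v,w'}$ (an empty product being omitted, i.e. equal to $1$). Finally $Q(X,z)=\sum_{w\in\mathcal V}Q_{r,w}(X)$. $T$ has an $\mathcal S$-embedding into $D$ if there is an injective map $f:V\to\mathcal V$ such that (E1) $(u,v)\in A$ implies $(f(u),f(v))\in\mathcal A$; (E2) $\mathcal S\subseteq f(V)$; (E3) $L(v)\le B(f(v))$ for all $v\in V$. *)

theory Defs
  imports Main "HOL-Library.Poly_Mapping"
begin

datatype 'v pvar = Xv 'v | Zv

(* Polynomials in the variables x_w, z with natural-number coefficients: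
   a monomial is a finitely supported exponent map, a polynomial a finitely
   supported coefficient map on monomials (MPoly-style representation). *)
type_synonym 'v poly_xz = "('v pvar \<Rightarrow>\<^sub>0 nat) \<Rightarrow>\<^sub>0 nat"

definition var_poly :: "'v pvar \<Rightarrow> 'v poly_xz" where
  "var_poly v = Poly_Mapping.single (Poly_Mapping.single v 1) 1"

definition rooted_oriented_tree ::
  "'a set \<Rightarrow> ('a \<times> 'a) set \<Rightarrow> 'a \<Rightarrow> ('a \<Rightarrow> 'a) \<Rightarrow> bool" where
  "rooted_oriented_tree V A r p \<longleftrightarrow>
     finite V \<and> r \<in> V \<and> A \<subseteq> V \<times> V \<and>
     (\<forall>u \<in> V - {r}. p u \<in> V \<and> (((p u, u) \<in> A) \<noteq> ((u, p u) \<in> A))) \<and>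
     (\<forall>(a, b) \<in> A. (b \<noteq> r \<and> a = p b) \<or> (a \<noteq> r \<and> b = p a)) \<and>
     (\<forall>u \<in> V. \<exists>k. (p ^^ k) u = r)"

definition children :: "'a set \<Rightarrow> 'a \<Rightarrow> ('a \<Rightarrow> 'a) \<Rightarrow> 'a \<Rightarrow> 'a set" where
  "children V r p u = {v \<in> V. v \<noteq> r \<and> p v = u}"

definition N_in :: "'a set \<Rightarrow> ('a \<times> 'a) set \<Rightarrow> 'a \<Rightarrow> ('a \<Rightarrow> 'a) \<Rightarrow> 'a \<Rightarrow> 'a set" where
  "N_in V A r p u = {v \<in> children V r p u. (v, u) \<in> A}"

definition N_out :: "'a set \<Rightarrow> ('a \<times> 'a) set \<Rightarrow> 'a \<Rightarrow> ('a \<Rightarrow> 'a) \<Rightarrow> 'a \<Rightarrow> 'a set" where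
  "N_out V A r p u = {v \<in> children V r p u. (u, v) \<in> A}"

definition Sset :: "'v set \<Rightarrow> ('v \<Rightarrow> nat) \<Rightarrow> ('v \<Rightarrow> nat) \<Rightarrow> 'v set" where
  "Sset \<V> F B = {w \<in> \<V>. F w = 1 \<or> B w > 0}"

definition zeta :: "'v set \<Rightarrow> ('v \<Rightarrow> nat) \<Rightarrow> ('v \<Rightarrow> nat) \<Rightarrow> ('a \<Rightarrow> nat) \<Rightarrow> 'a \<Rightarrow> 'v \<Rightarrow> 'v poly_xz" where
  "zeta \<V> F B L u w =
     (if L u \<le> B w then (if w \<in> Sset \<V> F B then var_poly Zv else 1) else 0)"

(* Q_{u,w}, defined bottom-up; the first argument is recursion fuel (the
   recursion is on the subtree of u; fuel card V suffices, see Qpoly). *)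
fun Qf :: "nat \<Rightarrow> 'v set \<Rightarrow> ('v \<times> 'v) set \<Rightarrow> ('v \<Rightarrow> nat) \<Rightarrow> ('v \<Rightarrow> nat) \<Rightarrow>
            'a set \<Rightarrow> ('a \<times> 'a) set \<Rightarrow> ('a \<Rightarrow> nat) \<Rightarrow> 'a \<Rightarrow> ('a \<Rightarrow> 'a) \<Rightarrow>
            'a \<Rightarrow> 'v \<Rightarrow> 'v poly_xz" where
  "Qf 0 \<V> \<A> F B V A L r p u w = 0"
| "Qf (Suc n) \<V> \<A> F B V A L r p u w =
     zeta \<V> F B L u w * var_poly (Xv w)
     * (\<Prod>v \<in> N_in V A r p u. \<Sum>w' \<in> {w'. (w', w) \<in> \<A>}. Qf n \<V> \<A> F B V A L r p v w')
     * (\<Prod>v \<in> N_out V A r p u. \<Sum>w' \<in> {w'. (w, w') \<in> \<A>}. Qf n \<V> \<A> F B V A L r p v w')"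

definition Quw where
  "Quw \<V> \<A> F B V A L r p u w = Qf (card V) \<V> \<A> F B V A L r p u w"

definition Qpoly where
  "Qpoly \<V> \<A> F B V A L r p = (\<Sum>w \<in> \<V>. Quw \<V> \<A> F B V A L r p r w)"

definition S_embedding ::
  "'v set \<Rightarrow> ('v \<times> 'v) set \<Rightarrow> ('v \<Rightarrow> nat) \<Rightarrow> ('v \<Rightarrow> nat) \<Rightarrow>
   'a set \<Rightarrow> ('a \<times> 'a) set \<Rightarrow> ('a \<Rightarrow> nat) \<Rightarrow> ('a \<Rightarrow> 'v) \<Rightarrow> bool" where
  "S_embedding \<V> \<A> F B V A L f \<longleftrightarrow>
     inj_on f V \<and> f ` V \<subseteq> \<V> \<and>
     (\<forall>(u, v) \<in> A. (f u, f v) \<in> \<A>) \<and>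
     Sset \<V> F B \<subseteq> f ` V \<and>
     (\<forall>v \<in> V. L v \<le> B (f v))"

end

theory Submission
  imports Defs
begin

text \<open>Since all coefficients are natural numbers nothing cancels: the monomials of a
  product are exactly the sums of monomials of the factors, and those of a sum are the union.
  Unfolding the recursion, the monomials of \<open>Q\<^sub>u\<^sub>,\<^sub>w\<close> are therefore exactly the
  monomials \<open>\<Prod>x. x\<^bsub>g x\<^esub> z\<^bsup>[g x \<in> S]\<^esup>\<close> of the maps \<open>g\<close> from the subtree
  rooted at \<open>u\<close> into \<open>D\<close> with \<open>g u = w\<close> that respect the bounds \<open>L \<le> B\<close> and send
  tree arcs to arcs of \<open>D\<close>. Such a monomial is multilinear of degree \<open>\<eta>\<close> exactly when
  \<open>g\<close> is injective, and then its \<open>z\<close>-degree is \<open>|S|\<close> exactly when the image of \<open>g\<close>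
  covers \<open>S\<close>.\<close>

lemma keys_mult_nat:
  fixes f g :: "'m::comm_monoid_add \<Rightarrow>\<^sub>0 nat"
  shows "Poly_Mapping.keys (f * g) = {a + b | a b. a \<in> Poly_Mapping.keys f \<and> b \<in> Poly_Mapping.keys g}"
proof
  show "Poly_Mapping.keys (f * g) \<subseteq> {a + b | a b. a \<in> Poly_Mapping.keys f \<and> b \<in> Poly_Mapping.keys g}"
    by (rule keys_mult)
  show "{a + b | a b. a \<in> Poly_Mapping.keys f \<and> b \<in> Poly_Mapping.keys g} \<subseteq> Poly_Mapping.keys (f * g)"
  proof clarify
    fix a b assume a: "a \<in> Poly_Mapping.keys f" and b: "b \<in> Poly_Mapping.keys g"
    have fin_g: "finite {q. (Poly_Mapping.lookup g q when a + b = l + q) \<noteq> 0}" for l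
      by (rule finite_subset[of _ "Poly_Mapping.keys g"]) (auto simp: in_keys_iff when_def)
    have fin_f: "finite {l. Poly_Mapping.lookup f l * (\<Sum>q. Poly_Mapping.lookup g q when a + b = l + q) \<noteq> 0}"
      by (rule finite_subset[of _ "Poly_Mapping.keys f"]) (auto simp: in_keys_iff when_def)
    have "(\<Sum>q. Poly_Mapping.lookup g q when a + b = a + q) \<noteq> 0"
      using b fin_g[of a] by (auto simp: in_keys_iff fun_eq_iff intro!: exI[of _ b])
    then have "(\<lambda>l. Poly_Mapping.lookup f l * (\<Sum>q. Poly_Mapping.lookup g q when a + b = l + q)) a \<noteq> 0"
      using a by (simp add: in_keys_iff)
    then show "a + b \<in> Poly_Mapping.keys (f * g)"
      using fin_f by (auto simp: in_keys_iff lookup_mult fun_eq_iff)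
  qed
qed

lemma keys_sum_nat:
  fixes f :: "'i \<Rightarrow> ('m \<Rightarrow>\<^sub>0 nat)"
  assumes "finite I"
  shows "Poly_Mapping.keys (sum f I) = (\<Union>i\<in>I. Poly_Mapping.keys (f i))"
  using assms by (auto simp: in_keys_iff lookup_sum)

lemma keys_prod_nat:
  fixes f :: "'i \<Rightarrow> ('m::comm_monoid_add \<Rightarrow>\<^sub>0 nat)"
  assumes "finite I"
  shows "Poly_Mapping.keys (prod f I) = {sum a I | a. \<forall>i\<in>I. a i \<in> Poly_Mapping.keys (f i)}"
  using assms
proof (induction I rule: finite_induct)
  case empty
  show ?case by simp
next
  case (insert i I)
  show ?case
  proof (intro equalityI subsetI)
    fix m assume "m \<in> Poly_Mapping.keys (prod f (insert i I))"
    then obtain b a where "m = b + sum a I" "b \<in> Poly_Mapping.keys (f i)" "\<forall>j\<in>I. a j \<in> Poly_Mapping.keys (f j)"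
      using insert by (auto simp: keys_mult_nat)
    moreover have "sum (a(i := b)) I = sum a I"
      using insert.hyps by (intro sum.cong) auto
    ultimately show "m \<in> {sum a (insert i I) | a. \<forall>j\<in>insert i I. a j \<in> Poly_Mapping.keys (f j)}"
      using insert.hyps by (auto intro!: exI[of _ "a(i := b)"])
  next
    fix m assume "m \<in> {sum a (insert i I) | a. \<forall>j\<in>insert i I. a j \<in> Poly_Mapping.keys (f j)}"
    then show "m \<in> Poly_Mapping.keys (prod f (insert i I))"
      using insert by (auto simp: keys_mult_nat)
  qed
qed

definition vertex_monom :: "'v set \<Rightarrow> ('v \<Rightarrow> nat) \<Rightarrow> ('v \<Rightarrow> nat) \<Rightarrow> 'v \<Rightarrow> ('v pvar \<Rightarrow>\<^sub>0 nat)" where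
  "vertex_monom \<V> F B w =
     Poly_Mapping.single (Xv w) 1 + (if w \<in> Sset \<V> F B then Poly_Mapping.single Zv 1 else 0)"

definition hom_monom ::
  "'v set \<Rightarrow> ('v \<Rightarrow> nat) \<Rightarrow> ('v \<Rightarrow> nat) \<Rightarrow> 'a set \<Rightarrow> ('a \<Rightarrow> 'v) \<Rightarrow> ('v pvar \<Rightarrow>\<^sub>0 nat)" where
  "hom_monom \<V> F B X g = (\<Sum>x\<in>X. vertex_monom \<V> F B (g x))"

lemma zeta_mult_var_poly:
  "zeta \<V> F B L u w * var_poly (Xv w) =
     (if L u \<le> B w then Poly_Mapping.single (vertex_monom \<V> F B w) 1 else 0)"
  unfolding zeta_def var_poly_def vertex_monom_def by (simp add: mult_single add.commute)

lemma lookup_vertex_monom: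
  "Poly_Mapping.lookup (vertex_monom \<V> F B w) (Xv w') = (if w = w' then 1 else 0)"
  "Poly_Mapping.lookup (vertex_monom \<V> F B w) Zv = (if w \<in> Sset \<V> F B then 1 else 0)"
  by (simp_all add: vertex_monom_def lookup_add lookup_single when_def)

lemma lookup_hom_monom_Xv:
  "finite X \<Longrightarrow> Poly_Mapping.lookup (hom_monom \<V> F B X g) (Xv w) = card {x\<in>X. g x = w}"
  by (simp add: hom_monom_def lookup_sum lookup_vertex_monom sum.If_cases Int_def)

lemma lookup_hom_monom_Zv:
  "finite X \<Longrightarrow>
   Poly_Mapping.lookup (hom_monom \<V> F B X g) Zv = card {x\<in>X. g x \<in> Sset \<V> F B}"
  by (simp add: hom_monom_def lookup_sum lookup_vertex_monom sum.If_cases Int_def)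

lemma multilinear_hom_monom_iff:
  assumes "finite X" and "g ` X \<subseteq> \<V>"
  shows "(\<exists>W\<subseteq>\<V>. card W = card X \<and>
      (\<forall>w. Poly_Mapping.lookup (hom_monom \<V> F B X g) (Xv w) = (if w \<in> W then 1 else 0)))
    \<longleftrightarrow> inj_on g X"
proof
  assume "\<exists>W\<subseteq>\<V>. card W = card X \<and>
      (\<forall>w. Poly_Mapping.lookup (hom_monom \<V> F B X g) (Xv w) = (if w \<in> W then 1 else 0))"
  then obtain W where "\<forall>w. Poly_Mapping.lookup (hom_monom \<V> F B X g) (Xv w) = (if w \<in> W then 1 else 0)"
    by blast
  then have card_fibre: "card {x\<in>X. g x = w} \<le> 1" for w
    using lookup_hom_monom_Xv[OF assms(1), of \<V> F B g w] by (cases "w \<in> W") auto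
  show "inj_on g X"
  proof (rule inj_onI)
    fix x y assume "x \<in> X" "y \<in> X" "g x = g y"
    moreover have "finite {z\<in>X. g z = g x}"
      using assms(1) by simp
    ultimately show "x = y"
      using card_le_Suc0_iff_eq card_fibre[of "g x"] by fastforce
  qed
next
  assume inj: "inj_on g X"
  have "card {x\<in>X. g x = w} = (if w \<in> g ` X then 1 else 0)" for w
  proof (cases "w \<in> g ` X")
    case True
    then obtain y where "y \<in> X" and "w = g y"
      by blast
    then have "{x\<in>X. g x = w} = {y}"
      using inj by (auto dest: inj_onD)
    then show ?thesis
      using True by simp
  next
    case False
    then have "{x\<in>X. g x = w} = {}"
      by blast
    then show ?thesis
      using False by (simp only: card.empty if_False)
  qed
  then have "Poly_Mapping.lookup (hom_monom \<V> F B X g) (Xv w) = (if w \<in> g ` X then 1 else 0)" for w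
    by (simp add: lookup_hom_monom_Xv[OF assms(1)])
  with assms(2) card_image[OF inj] show "\<exists>W\<subseteq>\<V>. card W = card X \<and>
      (\<forall>w. Poly_Mapping.lookup (hom_monom \<V> F B X g) (Xv w) = (if w \<in> W then 1 else 0))"
    by blast
qed

lemma z_degree_hom_monom_iff:
  assumes "finite X" and "finite \<V>" and "inj_on g X"
  shows "Poly_Mapping.lookup (hom_monom \<V> F B X g) Zv = card (Sset \<V> F B) \<longleftrightarrow>
    Sset \<V> F B \<subseteq> g ` X"
proof -
  have finite_S: "finite (Sset \<V> F B)"
    using assms(2) by (simp add: Sset_def)
  have "Poly_Mapping.lookup (hom_monom \<V> F B X g) Zv = card {x\<in>X. g x \<in> Sset \<V> F B}"
    by (rule lookup_hom_monom_Zv[OF assms(1)])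
  also have "\<dots> = card (g ` {x\<in>X. g x \<in> Sset \<V> F B})"
    using assms(3) by (intro card_image[symmetric]) (simp add: inj_on_def)
  also have "g ` {x\<in>X. g x \<in> Sset \<V> F B} = g ` X \<inter> Sset \<V> F B"
    by blast
  finally show ?thesis
    using card_subset_eq[OF finite_S, of "g ` X \<inter> Sset \<V> F B"] by (auto simp: Int_absorb1)
qed

definition depth :: "('a \<Rightarrow> 'a) \<Rightarrow> 'a \<Rightarrow> 'a \<Rightarrow> nat" where
  "depth p r u = (LEAST k. (p ^^ k) u = r)"

text \<open>The bound \<open>k \<le> depth p r x\<close> matters: the parent of the root is unconstrained, so
  iterating \<open>p\<close> past the root may lead anywhere.\<close>
definition subtree :: "'a set \<Rightarrow> ('a \<Rightarrow> 'a) \<Rightarrow> 'a \<Rightarrow> 'a \<Rightarrow> 'a set" where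
  "subtree V p r u = {x \<in> V. \<exists>k \<le> depth p r x. (p ^^ k) x = u}"

definition arc_targets :: "('v \<times> 'v) set \<Rightarrow> ('a \<times> 'a) set \<Rightarrow> 'a \<Rightarrow> 'v \<Rightarrow> 'a \<Rightarrow> 'v set" where
  "arc_targets \<A> A u w v = (if (v, u) \<in> A then {w'. (w', w) \<in> \<A>} else {w'. (w, w') \<in> \<A>})"

definition tree_hom_on ::
  "'v set \<Rightarrow> ('v \<times> 'v) set \<Rightarrow> ('v \<Rightarrow> nat) \<Rightarrow> 'a set \<Rightarrow> ('a \<times> 'a) set \<Rightarrow> ('a \<Rightarrow> nat) \<Rightarrow>
   'a \<Rightarrow> ('a \<Rightarrow> 'a) \<Rightarrow> 'a set \<Rightarrow> ('a \<Rightarrow> 'v) \<Rightarrow> bool" where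
  "tree_hom_on \<V> \<A> B V A L r p X g \<longleftrightarrow>
     (\<forall>x\<in>X. g x \<in> \<V> \<and> L x \<le> B (g x) \<and>
       (\<forall>v\<in>children V r p x. g v \<in> arc_targets \<A> A x (g x) v))"

locale rooted_tree =
  fixes V :: "'a set" and A :: "('a \<times> 'a) set" and r :: 'a and p :: "'a \<Rightarrow> 'a"
  assumes rooted_oriented_tree: "rooted_oriented_tree V A r p"
begin

abbreviation "dep \<equiv> depth p r"
abbreviation "sub \<equiv> subtree V p r"
abbreviation "ch \<equiv> children V r p"

lemma finite_V: "finite V"
  and root_in_V: "r \<in> V"
  and arcs_in_V: "A \<subseteq> V \<times> V"
  and parent_in_V: "u \<in> V \<Longrightarrow> u \<noteq> r \<Longrightarrow> p u \<in> V"
  and parent_arc: "u \<in> V \<Longrightarrow> u \<noteq> r \<Longrightarrow> ((p u, u) \<in> A) \<noteq> ((u, p u) \<in> A)"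
  and arc_parent: "(a, b) \<in> A \<Longrightarrow> (b \<noteq> r \<and> a = p b) \<or> (a \<noteq> r \<and> b = p a)"
  and reaches_root: "u \<in> V \<Longrightarrow> \<exists>k. (p ^^ k) u = r"
  using rooted_oriented_tree unfolding rooted_oriented_tree_def by blast+

lemma finite_children: "finite (ch u)"
  using finite_V unfolding children_def by simp

lemma child_arc: "v \<in> ch u \<Longrightarrow> ((v, u) \<in> A) \<noteq> ((u, v) \<in> A)"
  using parent_arc unfolding children_def by auto

lemma funpow_depth: "u \<in> V \<Longrightarrow> (p ^^ dep u) u = r"
  unfolding depth_def by (rule LeastI_ex) (rule reaches_root)

lemma funpow_less_depth: "j < dep u \<Longrightarrow> (p ^^ j) u \<noteq> r"
  unfolding depth_def by (rule not_less_Least)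

lemma funpow_in_V: "x \<in> V \<Longrightarrow> k \<le> dep x \<Longrightarrow> (p ^^ k) x \<in> V"
proof (induction k)
  case (Suc k)
  then show ?case
    using parent_in_V funpow_less_depth[of k x] by simp
qed simp

lemma depth_funpow:
  assumes x: "x \<in> V" and k: "k \<le> dep x"
  shows "dep ((p ^^ k) x) = dep x - k"
proof (rule antisym)
  have "(p ^^ (dep x - k)) ((p ^^ k) x) = (p ^^ (dep x - k + k)) x"
    by (simp add: funpow_add)
  then have "(p ^^ (dep x - k)) ((p ^^ k) x) = r"
    using funpow_depth[OF x] k by simp
  then show "dep ((p ^^ k) x) \<le> dep x - k"
    unfolding depth_def by (rule Least_le)
  have "(p ^^ (dep ((p ^^ k) x) + k)) x = r"
    using funpow_depth[OF funpow_in_V[OF x k]] by (simp add: funpow_add)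
  then show "dep x - k \<le> dep ((p ^^ k) x)"
    using funpow_less_depth by (meson diff_le_mono2 le_diff_conv not_le)
qed

lemma depth_child:
  assumes "v \<in> ch u"
  shows "u \<in> V" and "dep v = Suc (dep u)"
proof -
  have v: "v \<in> V" "v \<noteq> r" "p v = u"
    using assms unfolding children_def by auto
  then show "u \<in> V"
    using parent_in_V by blast
  have "dep v \<noteq> 0"
    using v funpow_depth by (metis funpow_0)
  then show "dep v = Suc (dep u)"
    using depth_funpow[OF v(1), of 1] v(3) by simp
qed

lemma mem_subtree_iff:
  "x \<in> sub u \<longleftrightarrow> x \<in> V \<and> dep u \<le> dep x \<and> (p ^^ (dep x - dep u)) x = u"
proof
  assume "x \<in> sub u"
  then obtain k where "x \<in> V" "k \<le> dep x" "(p ^^ k) x = u"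
    unfolding subtree_def by blast
  moreover from this have "dep u = dep x - k"
    using depth_funpow by blast
  ultimately show "x \<in> V \<and> dep u \<le> dep x \<and> (p ^^ (dep x - dep u)) x = u"
    by simp
qed (unfold subtree_def, use diff_le_self in blast)

lemma self_mem_subtree: "u \<in> V \<Longrightarrow> u \<in> sub u"
  by (simp add: mem_subtree_iff)

lemma subtree_subset: "sub u \<subseteq> V"
  by (auto simp: subtree_def)

lemma finite_subtree: "finite (sub u)"
  using finite_subset[OF subtree_subset finite_V] .

lemma not_mem_subtree_child: "v \<in> ch u \<Longrightarrow> u \<notin> sub v"
  by (simp add: mem_subtree_iff depth_child)

lemma subtrees_children_disjoint:
  "v \<in> ch u \<Longrightarrow> v' \<in> ch u \<Longrightarrow> x \<in> sub v \<Longrightarrow> x \<in> sub v' \<Longrightarrow> v = v'"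
  by (metis mem_subtree_iff depth_child(2))

lemma children_subset_subtree: "x \<in> sub v \<Longrightarrow> ch x \<subseteq> sub v"
proof
  fix y assume x: "x \<in> sub v" and y: "y \<in> ch x"
  have y_V: "y \<in> V" and p_y: "p y = x" and dep_y: "dep y = Suc (dep x)"
    using y depth_child[OF y] unfolding children_def by auto
  have le: "dep v \<le> dep x" and up: "(p ^^ (dep x - dep v)) x = v"
    using x by (simp_all add: mem_subtree_iff)
  have "dep y - dep v = Suc (dep x - dep v)"
    using le dep_y by simp
  then have "(p ^^ (dep y - dep v)) y = v"
    using up p_y by (simp only: funpow_Suc_right comp_apply)
  then show "y \<in> sub v"
    using y_V le dep_y by (simp add: mem_subtree_iff)
qed

lemma subtree_unfold: "u \<in> V \<Longrightarrow> sub u = insert u (\<Union>v\<in>ch u. sub v)"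
proof (intro equalityI subsetI)
  fix x assume "x \<in> sub u"
  then obtain k where k: "x \<in> V" "k \<le> dep x" "(p ^^ k) x = u"
    unfolding subtree_def by blast
  show "x \<in> insert u (\<Union>v\<in>ch u. sub v)"
  proof (cases k)
    case (Suc j)
    then have "(p ^^ j) x \<in> ch u"
      using k funpow_in_V[of x j] funpow_less_depth[of j x] by (simp add: children_def)
    moreover have "x \<in> sub ((p ^^ j) x)"
      using k Suc by (auto simp: subtree_def intro!: exI[of _ j])
    ultimately show ?thesis
      by blast
  qed (use k in simp)
next
  fix x assume u: "u \<in> V" and "x \<in> insert u (\<Union>v\<in>ch u. sub v)"
  then consider "x = u" | v where "v \<in> ch u" "x \<in> sub v"
    by blast
  then show "x \<in> sub u"
  proof cases
    case 2
    have le: "dep v \<le> dep x" and up: "(p ^^ (dep x - dep v)) x = v"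
      using 2(2) by (simp_all add: mem_subtree_iff)
    have p_v: "p v = u" and dep_v: "dep v = Suc (dep u)"
      using 2(1) depth_child[OF 2(1)] unfolding children_def by auto
    have "dep x - dep u = Suc (dep x - dep v)"
      using le dep_v by simp
    then have "(p ^^ (dep x - dep u)) x = u"
      using up p_v by simp
    then show ?thesis
      using 2(2) le dep_v by (simp add: mem_subtree_iff)
  qed (use u self_mem_subtree in simp)
qed

lemma subtree_root: "sub r = V"
  using funpow_depth unfolding subtree_def by blast

lemma card_subtree_child: "v \<in> ch u \<Longrightarrow> card (sub v) < card (sub u)"
proof (rule psubset_card_mono[OF finite_subtree])
  assume v: "v \<in> ch u"
  then have "u \<in> V"
    by (rule depth_child)
  then show "sub v \<subset> sub u"
    using subtree_unfold not_mem_subtree_child[OF v] v by blast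
qed

lemma Qf_Suc_children:
  "Qf (Suc n) \<V> \<A> F B V A L r p u w = zeta \<V> F B L u w * var_poly (Xv w) *
     (\<Prod>v\<in>ch u. \<Sum>w'\<in>arc_targets \<A> A u w v. Qf n \<V> \<A> F B V A L r p v w')"
proof -
  let ?P = "\<lambda>v. \<Sum>w'\<in>arc_targets \<A> A u w v. Qf n \<V> \<A> F B V A L r p v w'"
  have ch_u: "ch u = N_in V A r p u \<union> N_out V A r p u"
    and disj: "N_in V A r p u \<inter> N_out V A r p u = {}"
    using child_arc[of _ u] unfolding N_in_def N_out_def by auto
  have "finite (N_in V A r p u)" "finite (N_out V A r p u)"
    using finite_children[of u] unfolding ch_u by simp_all
  then have "prod ?P (ch u) = prod ?P (N_in V A r p u) * prod ?P (N_out V A r p u)"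
    unfolding ch_u using disj by (rule prod.union_disjoint)
  moreover have "prod ?P (N_in V A r p u) =
      (\<Prod>v\<in>N_in V A r p u. \<Sum>w'\<in>{w'. (w', w) \<in> \<A>}. Qf n \<V> \<A> F B V A L r p v w')"
    by (rule prod.cong) (simp_all add: arc_targets_def N_in_def)
  moreover have "prod ?P (N_out V A r p u) =
      (\<Prod>v\<in>N_out V A r p u. \<Sum>w'\<in>{w'. (w, w') \<in> \<A>}. Qf n \<V> \<A> F B V A L r p v w')"
    using child_arc[of _ u] by (intro prod.cong) (auto simp: arc_targets_def N_out_def)
  ultimately show ?thesis
    by (simp only: Qf.simps mult.assoc)
qed

lemma arc_targets_iff_arcs:
  "(\<forall>x\<in>V. \<forall>v\<in>ch x. g v \<in> arc_targets \<A> A x (g x) v) \<longleftrightarrow> (\<forall>(a, b)\<in>A. (g a, g b) \<in> \<A>)"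
proof
  assume targets: "\<forall>x\<in>V. \<forall>v\<in>ch x. g v \<in> arc_targets \<A> A x (g x) v"
  show "\<forall>(a, b)\<in>A. (g a, g b) \<in> \<A>"
  proof clarify
    fix a b assume ab: "(a, b) \<in> A"
    then have "a \<in> V" "b \<in> V"
      using arcs_in_V by auto
    from arc_parent[OF ab] show "(g a, g b) \<in> \<A>"
    proof
      assume "b \<noteq> r \<and> a = p b"
      then have "b \<in> ch a"
        using \<open>b \<in> V\<close> by (simp add: children_def)
      moreover from this have "(b, a) \<notin> A"
        using child_arc ab by blast
      ultimately show ?thesis
        using targets \<open>a \<in> V\<close> by (force simp: arc_targets_def)
    next
      assume "a \<noteq> r \<and> b = p a"
      then have "a \<in> ch b"
        using \<open>a \<in> V\<close> by (simp add: children_def)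
      then show ?thesis
        using targets \<open>b \<in> V\<close> ab by (force simp: arc_targets_def)
    qed
  qed
next
  assume "\<forall>(a, b)\<in>A. (g a, g b) \<in> \<A>"
  then show "\<forall>x\<in>V. \<forall>v\<in>ch x. g v \<in> arc_targets \<A> A x (g x) v"
    using child_arc unfolding arc_targets_def by fastforce
qed

end

locale tree_in_digraph = rooted_tree V A r p
  for V :: "'a set" and A r p +
  fixes \<V> :: "'v set" and \<A> :: "('v \<times> 'v) set" and F B :: "'v \<Rightarrow> nat" and L :: "'a \<Rightarrow> nat"
  assumes finite_\<V>: "finite \<V>" and arcs_in_\<V>: "\<A> \<subseteq> \<V> \<times> \<V>"
begin

abbreviation "Q n \<equiv> Qf n \<V> \<A> F B V A L r p"
abbreviation "hom \<equiv> tree_hom_on \<V> \<A> B V A L r p"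
abbreviation "monom \<equiv> hom_monom \<V> F B"
abbreviation "targets \<equiv> arc_targets \<A> A"

lemma arc_targets_subset: "targets u w v \<subseteq> \<V>"
  using arcs_in_\<V> by (auto simp: arc_targets_def)

lemma finite_arc_targets: "finite (targets u w v)"
  using finite_subset[OF arc_targets_subset finite_\<V>] .

lemma keys_Qf_Suc:
  "m \<in> Poly_Mapping.keys (Q (Suc n) u w) \<longleftrightarrow> L u \<le> B w \<and>
     (\<exists>a. m = vertex_monom \<V> F B w + sum a (ch u) \<and>
       (\<forall>v\<in>ch u. \<exists>w'\<in>targets u w v. a v \<in> Poly_Mapping.keys (Q n v w')))"
proof -
  have "Poly_Mapping.keys (\<Prod>v\<in>ch u. \<Sum>w'\<in>targets u w v. Q n v w') =
      {sum a (ch u) | a. \<forall>v\<in>ch u. \<exists>w'\<in>targets u w v. a v \<in> Poly_Mapping.keys (Q n v w')}"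
    by (simp add: keys_prod_nat finite_children keys_sum_nat finite_arc_targets)
  then show ?thesis
    unfolding Qf_Suc_children zeta_mult_var_poly by (auto simp: keys_mult_nat simp del: Qf.simps)
qed

lemma hom_monom_subtree:
  assumes "u \<in> V"
  shows "monom (sub u) g = vertex_monom \<V> F B (g u) + (\<Sum>v\<in>ch u. monom (sub v) g)"
proof -
  have "u \<notin> (\<Union>v\<in>ch u. sub v)"
    using not_mem_subtree_child by blast
  moreover have "(\<Sum>x\<in>(\<Union>v\<in>ch u. sub v). vertex_monom \<V> F B (g x)) = (\<Sum>v\<in>ch u. monom (sub v) g)"
    unfolding hom_monom_def using finite_children finite_subtree subtrees_children_disjoint
    by (intro sum.UNION_disjoint) blast+
  ultimately show ?thesis
    unfolding hom_monom_def subtree_unfold[OF assms]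
    using finite_children finite_subtree by simp
qed

lemma hom_on_cong:
  assumes "\<forall>x\<in>X. g x = h x" and "\<forall>x\<in>X. ch x \<subseteq> X"
  shows "hom X g \<longleftrightarrow> hom X h"
proof -
  have "g v = h v" if "x \<in> X" and "v \<in> ch x" for x v
    using assms that by blast
  with assms(1) show ?thesis
    unfolding tree_hom_on_def by (metis (no_types, lifting))
qed

lemma hom_on_subtree_restrict:
  assumes u: "u \<in> V" and g: "hom (sub u) g"
  shows "L u \<le> B (g u)" and "v \<in> ch u \<Longrightarrow> g v \<in> targets u (g u) v"
    and "v \<in> ch u \<Longrightarrow> hom (sub v) g"
proof -
  show "L u \<le> B (g u)" and "v \<in> ch u \<Longrightarrow> g v \<in> targets u (g u) v"
    using g self_mem_subtree[OF u] unfolding tree_hom_on_def by auto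
  show "v \<in> ch u \<Longrightarrow> hom (sub v) g"
    using g subtree_unfold[OF u] unfolding tree_hom_on_def by blast
qed

lemma hom_on_subtree_glue:
  assumes u: "u \<in> V" and w: "w \<in> \<V>" and L_u: "L u \<le> B w"
    and G: "\<And>v. v \<in> ch u \<Longrightarrow> G v v \<in> targets u w v \<and> hom (sub v) (G v)"
  obtains g where "hom (sub u) g" and "g u = w"
    and "\<And>v. v \<in> ch u \<Longrightarrow> monom (sub v) g = monom (sub v) (G v)"
proof
  define g where "g x = (if x = u then w else G (THE v. v \<in> ch u \<and> x \<in> sub v) x)" for x
  have g_G: "g x = G v x" if v: "v \<in> ch u" and x: "x \<in> sub v" for v x
  proof -
    have "(THE v. v \<in> ch u \<and> x \<in> sub v) = v"
      using v x subtrees_children_disjoint by blast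
    moreover have "x \<noteq> u"
      using not_mem_subtree_child v x by blast
    ultimately show ?thesis
      by (simp add: g_def)
  qed
  have hom_v: "hom (sub v) g" if "v \<in> ch u" for v
    using hom_on_cong[of "sub v" g "G v"] g_G[OF that] children_subset_subtree G[OF that] by blast
  have "g v \<in> targets u w v" if "v \<in> ch u" for v
    using g_G[OF that self_mem_subtree] G[OF that] that by (simp add: children_def)
  then have "hom {u} g"
    using w L_u by (simp add: tree_hom_on_def g_def)
  with hom_v show "hom (sub u) g"
    unfolding subtree_unfold[OF u] tree_hom_on_def by blast
  show "g u = w"
    by (simp add: g_def)
  show "monom (sub v) g = monom (sub v) (G v)" if "v \<in> ch u" for v
    unfolding hom_monom_def using g_G[OF that] by simp
qed

lemma hom_on_subtree_iff:
  assumes u: "u \<in> V" and w: "w \<in> \<V>"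
  shows "(\<exists>g. hom (sub u) g \<and> g u = w \<and> m = monom (sub u) g) \<longleftrightarrow> L u \<le> B w \<and>
     (\<exists>a. m = vertex_monom \<V> F B w + sum a (ch u) \<and>
       (\<forall>v\<in>ch u. \<exists>w'\<in>targets u w v. \<exists>g. hom (sub v) g \<and> g v = w' \<and> a v = monom (sub v) g))"
    (is "?glued \<longleftrightarrow> ?split")
proof
  assume ?glued
  then obtain g where g: "hom (sub u) g" "g u = w" "m = monom (sub u) g"
    by blast
  then have "m = vertex_monom \<V> F B w + (\<Sum>v\<in>ch u. monom (sub v) g)"
    using hom_monom_subtree[OF u] by simp
  with hom_on_subtree_restrict[OF u g(1)] g(2) show ?split
    by blast
next
  assume ?split
  then obtain a where L_u: "L u \<le> B w" and m: "m = vertex_monom \<V> F B w + sum a (ch u)"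
    and "\<forall>v\<in>ch u. \<exists>g. g v \<in> targets u w v \<and> hom (sub v) g \<and> a v = monom (sub v) g"
    by blast
  then obtain G
    where G: "\<And>v. v \<in> ch u \<Longrightarrow> G v v \<in> targets u w v \<and> hom (sub v) (G v) \<and> a v = monom (sub v) (G v)"
    by metis
  obtain g where g: "hom (sub u) g" "g u = w" "\<And>v. v \<in> ch u \<Longrightarrow> monom (sub v) g = a v"
    using hom_on_subtree_glue[OF u w L_u, of G] G by metis
  have "m = monom (sub u) g"
    using m g(2,3) hom_monom_subtree[OF u, of g] by simp
  with g show ?glued
    by blast
qed

lemma keys_Qf:
  assumes "u \<in> V" and "w \<in> \<V>" and "card (sub u) \<le> n"
  shows "m \<in> Poly_Mapping.keys (Q n u w) \<longleftrightarrow> (\<exists>g. hom (sub u) g \<and> g u = w \<and> m = monom (sub u) g)"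
  using assms
proof (induction n arbitrary: u w m)
  case 0
  then have False
    using self_mem_subtree[of u] finite_subtree[of u] by auto
  then show ?case ..
next
  case (Suc n)
  have IH: "a \<in> Poly_Mapping.keys (Q n v w') \<longleftrightarrow> (\<exists>g. hom (sub v) g \<and> g v = w' \<and> a = monom (sub v) g)"
    if v: "v \<in> ch u" and w': "w' \<in> targets u w v" for v w' a
  proof (rule Suc.IH)
    show "v \<in> V"
      using v by (simp add: children_def)
    show "w' \<in> \<V>"
      using w' arc_targets_subset by blast
    show "card (sub v) \<le> n"
      using card_subtree_child[OF v] Suc.prems(3) by simp
  qed
  show ?case
    unfolding keys_Qf_Suc hom_on_subtree_iff[OF Suc.prems(1,2)]
    by (simp add: IH cong: ball_cong bex_cong del: Qf.simps)
qed

lemma keys_Qpoly: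
  "m \<in> Poly_Mapping.keys (Qpoly \<V> \<A> F B V A L r p) \<longleftrightarrow> (\<exists>g. hom V g \<and> m = monom V g)"
proof -
  have "m \<in> Poly_Mapping.keys (Q (card V) r w) \<longleftrightarrow> (\<exists>g. hom V g \<and> g r = w \<and> m = monom V g)"
    if "w \<in> \<V>" for w
    using keys_Qf[OF root_in_V that, of "card V"] unfolding subtree_root by simp
  moreover have "hom V g \<Longrightarrow> g r \<in> \<V>" for g
    using root_in_V unfolding tree_hom_on_def by blast
  moreover have "m \<in> Poly_Mapping.keys (Qpoly \<V> \<A> F B V A L r p) \<longleftrightarrow>
      (\<exists>w\<in>\<V>. m \<in> Poly_Mapping.keys (Q (card V) r w))"
    unfolding Qpoly_def Quw_def keys_sum_nat[OF finite_\<V>] by (rule UN_iff)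
  ultimately show ?thesis
    by auto
qed

lemma S_embedding_iff:
  "S_embedding \<V> \<A> F B V A L f \<longleftrightarrow> hom V f \<and> inj_on f V \<and> Sset \<V> F B \<subseteq> f ` V"
  using arc_targets_iff_arcs[of f \<A>] unfolding S_embedding_def tree_hom_on_def by blast

end

theorem lemma4:
  fixes \<V> :: "'v set" and \<A> :: "('v \<times> 'v) set" and F B :: "'v \<Rightarrow> nat"
    and V :: "'a set" and A :: "('a \<times> 'a) set" and L :: "'a \<Rightarrow> nat"
    and r :: 'a and p :: "'a \<Rightarrow> 'a"
  assumes "finite \<V>" and "\<A> \<subseteq> \<V> \<times> \<V>"
    and "\<forall>w \<in> \<V>. F w \<in> {0, 1}"
    and "rooted_oriented_tree V A r p"
  shows "(\<exists>m. Poly_Mapping.lookup (Qpoly \<V> \<A> F B V A L r p) m \<noteq> 0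
            \<and> Poly_Mapping.lookup m Zv = card (Sset \<V> F B)
            \<and> (\<exists>W \<subseteq> \<V>. card W = card V
                  \<and> (\<forall>w. Poly_Mapping.lookup m (Xv w) = (if w \<in> W then 1 else 0))))
         \<longleftrightarrow> (\<exists>f. S_embedding \<V> \<A> F B V A L f)"
proof -
  interpret tree_in_digraph V A r p \<V> \<A> F B L
    using assms(1,2,4) by unfold_locales
  let ?shape = "\<lambda>m. Poly_Mapping.lookup m Zv = card (Sset \<V> F B)
    \<and> (\<exists>W \<subseteq> \<V>. card W = card V \<and> (\<forall>w. Poly_Mapping.lookup m (Xv w) = (if w \<in> W then 1 else 0)))"
  have shape_iff: "?shape (monom V g) \<longleftrightarrow> inj_on g V \<and> Sset \<V> F B \<subseteq> g ` V" if "hom V g" for g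
  proof -
    have "g ` V \<subseteq> \<V>"
      using that unfolding tree_hom_on_def by blast
    from multilinear_hom_monom_iff[OF finite_V this] show ?thesis
      using z_degree_hom_monom_iff[OF finite_V finite_\<V>, of g F B] by blast
  qed
  have "(\<exists>m. Poly_Mapping.lookup (Qpoly \<V> \<A> F B V A L r p) m \<noteq> 0 \<and> ?shape m)
      \<longleftrightarrow> (\<exists>m. m \<in> Poly_Mapping.keys (Qpoly \<V> \<A> F B V A L r p) \<and> ?shape m)"
    by (simp only: in_keys_iff)
  also have "\<dots> \<longleftrightarrow> (\<exists>g. hom V g \<and> ?shape (monom V g))"
    unfolding keys_Qpoly by blast
  also have "\<dots> \<longleftrightarrow> (\<exists>g. hom V g \<and> inj_on g V \<and> Sset \<V> F B \<subseteq> g ` V)"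
    by (simp add: shape_iff cong: conj_cong)
  also have "\<dots> \<longleftrightarrow> (\<exists>f. S_embedding \<V> \<A> F B V A L f)"
    by (simp only: S_embedding_iff)
  finally show ?thesis .
qed

end
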